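(* Let $f:\mathbb{R}^d\to\mathbb{R}$ be $L$-smooth (i.e. differentiable with $L$-Lipschitz gradient), let $g:\mathbb{R}^d\to\mathbb{R}$, let $h:\mathbb{R}^d\to\mathbb{R}\cup\{+\infty\}$ be proper, closed and convex, and let $\lambda>0$. Suppose that for every $w$ the minimum in $\min_{x}\left(\frac{1}{2\lambda}\|w-x\|_2^2+g(x)\right)$ is attained, and let $\zeta^{\lambda}(w)$ denote a chosen minimizer. Define $e_{\lambda}g(w)=\min_{x}\left(\frac{1}{2\lambda}\|w-x\|_2^2+g(x)\right)$, $D^{\lambda}(w)=\sup_{x\in\mathbb{R}^d}\left(\frac{1}{\lambda}w^Tx-\frac{1}{2\lambda}\|x\|_2^2-g(x)\right)$, and $\tilde\Phi_{\lambda}(w)=f(w)+e_{\lambda}g(w)+h(w)$. Fix a point $w^k\in\mathbb{R}^d$ and define $$U^k_{\lambda}(w)=\frac{1}{2\lambda}\|w\|_2^2-D^{\lambda}(w^k)-\frac{1}{\lambda}\zeta^{\lambda}(w^k)^T(w-w^k),\qquad E^k_{\lambda}(w)=f(w)+U^k_{\lambda}(w).$$ Then: (i) $E^k_{\lambda}(w)+h(w)\ge \tilde\Phi_{\lambda}(w)$ for all $w\in\mathbb{R}^d$; (ii) $E^k_{\lambda}(w^k)+h(w^k)=\tilde\Phi_{\lambda}(w^k)$; (iii) $E^k_{\lambda}$ is $L_{\lambda}$-smooth with $L_{\lambda}:=L+\frac{1}{\lambda}$.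
   Context: A function is $L$-smooth if it is differentiable and its gradient is $L$-Lipschitz with respect to the Euclidean norm. *)

theory Defs
  imports "HOL-Analysis.Analysis"
begin

definition L_smooth :: "real \<Rightarrow> ('a::euclidean_space \<Rightarrow> real) \<Rightarrow> bool" where
  "L_smooth L f \<longleftrightarrow>
     (\<exists>G :: 'a \<Rightarrow> 'a.
        (\<forall>x. (f has_derivative (\<lambda>v. G x \<bullet> v)) (at x)) \<and>
        (\<forall>x y. norm (G x - G y) \<le> L * norm (x - y)))"

definition proper_fun :: "('a \<Rightarrow> ereal) \<Rightarrow> bool" where
  "proper_fun h \<longleftrightarrow> (\<forall>x. h x \<noteq> -\<infinity>) \<and> (\<exists>x. h x \<noteq> \<infinity>)"

definition closed_fun :: "('a::topological_space \<Rightarrow> ereal) \<Rightarrow> bool" where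
  "closed_fun h \<longleftrightarrow> closed {(x, r::real). h x \<le> ereal r}"

definition convex_fun :: "('a::real_vector \<Rightarrow> ereal) \<Rightarrow> bool" where
  "convex_fun h \<longleftrightarrow> (\<forall>x y t. 0 \<le> t \<and> t \<le> 1 \<longrightarrow>
      h ((1 - t) *\<^sub>R x + t *\<^sub>R y) \<le> ereal (1 - t) * h x + ereal t * h y)"

definition moreau_env :: "real \<Rightarrow> ('a::euclidean_space \<Rightarrow> real) \<Rightarrow> 'a \<Rightarrow> real" where
  "moreau_env lam g w = (INF x. 1 / (2 * lam) * (norm (w - x))\<^sup>2 + g x)"

definition D_fun :: "real \<Rightarrow> ('a::euclidean_space \<Rightarrow> real) \<Rightarrow> 'a \<Rightarrow> real" where
  "D_fun lam g w = (SUP x. 1 / lam * (w \<bullet> x) - 1 / (2 * lam) * (norm x)\<^sup>2 - g x)"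

end

theory Submission
  imports Defs
begin

text \<open>Writing \<open>z = \<zeta>(w\<^sup>k)\<close>, the conjugate-type identity
  \<open>D\<^sup>\<lambda>(w) = \<parallel>w\<parallel>\<^sup>2/(2\<lambda>) - e\<^sub>\<lambda>g(w)\<close> turns \<open>U\<^sup>k\<^sub>\<lambda>\<close> into the quadratic
  \<open>\<parallel>w - z\<parallel>\<^sup>2/(2\<lambda>) + g(z)\<close>, i.e. the proximal objective at \<open>w\<close> evaluated at the fixed
  point \<open>z\<close>. It dominates \<open>e\<^sub>\<lambda>g(w)\<close>, with equality at \<open>w\<^sup>k\<close> where \<open>z\<close> is the minimiser,
  and it is \<open>1/\<lambda>\<close>-smooth, so \<open>E\<^sup>k\<^sub>\<lambda> = f + U\<^sup>k\<^sub>\<lambda>\<close> is \<open>(L + 1/\<lambda>)\<close>-smooth.\<close>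

lemma L_smooth_add:
  assumes "L_smooth L1 f" and "L_smooth L2 k"
  shows "L_smooth (L1 + L2) (\<lambda>x. f x + k x)"
proof -
  obtain F where F: "\<And>x. (f has_derivative (\<lambda>v. F x \<bullet> v)) (at x)"
    and F_lip: "\<And>x y. norm (F x - F y) \<le> L1 * norm (x - y)"
    using assms(1) unfolding L_smooth_def by blast
  obtain K where K: "\<And>x. (k has_derivative (\<lambda>v. K x \<bullet> v)) (at x)"
    and K_lip: "\<And>x y. norm (K x - K y) \<le> L2 * norm (x - y)"
    using assms(2) unfolding L_smooth_def by blast
  show ?thesis
    unfolding L_smooth_def
  proof (intro exI conjI allI)
    fix x
    show "((\<lambda>x. f x + k x) has_derivative (\<lambda>v. (F x + K x) \<bullet> v)) (at x)"
      using has_derivative_add[OF F K] by (simp add: inner_add_left)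
  next
    fix x y
    have "norm ((F x + K x) - (F y + K y)) \<le> norm (F x - F y) + norm (K x - K y)"
      by (metis add_diff_add norm_triangle_ineq)
    also have "\<dots> \<le> (L1 + L2) * norm (x - y)"
      using F_lip[of x y] K_lip[of x y] by (simp add: distrib_right)
    finally show "norm ((F x + K x) - (F y + K y)) \<le> (L1 + L2) * norm (x - y)" .
  qed
qed

lemma L_smooth_scaled_dist_sq:
  fixes z :: "'a::euclidean_space"
  assumes "a \<ge> 0"
  shows "L_smooth (2 * a) (\<lambda>w. a * (norm (w - z))\<^sup>2 + c)"
  unfolding L_smooth_def
proof (intro exI conjI allI)
  fix x
  have "((\<lambda>w. a * ((w - z) \<bullet> (w - z)) + c) has_derivative
         (\<lambda>v. a * (v \<bullet> (x - z) + (x - z) \<bullet> v) + 0)) (at x)"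
    by (intro derivative_eq_intros) auto
  then show "((\<lambda>w. a * (norm (w - z))\<^sup>2 + c) has_derivative
              (\<lambda>v. ((2 * a) *\<^sub>R (x - z)) \<bullet> v)) (at x)"
    by (simp add: power2_norm_eq_inner inner_commute algebra_simps)
next
  fix x y :: 'a
  have "(2 * a) *\<^sub>R (x - z) - (2 * a) *\<^sub>R (y - z) = (2 * a) *\<^sub>R (x - y)"
    by (simp add: algebra_simps)
  then show "norm ((2 * a) *\<^sub>R (x - z) - (2 * a) *\<^sub>R (y - z)) \<le> 2 * a * norm (x - y)"
    using assms by simp
qed

lemma norm_diff_sq:
  fixes a b :: "'a::real_inner"
  shows "(norm (a - b))\<^sup>2 = (norm a)\<^sup>2 - 2 * (a \<bullet> b) + (norm b)\<^sup>2"
  by (simp add: power2_norm_eq_inner inner_diff_left inner_diff_right inner_commute)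

lemma moreau_env_eq_at_minimizer:
  assumes "\<And>y. 1 / (2 * lam) * (norm (w - x))\<^sup>2 + g x \<le> 1 / (2 * lam) * (norm (w - y))\<^sup>2 + g y"
  shows "moreau_env lam g w = 1 / (2 * lam) * (norm (w - x))\<^sup>2 + g x"
  unfolding moreau_env_def by (rule cInf_eq_minimum) (use assms in auto)

lemma D_fun_eq_at_minimizer:
  assumes "lam \<noteq> 0"
    and min: "\<And>y. 1 / (2 * lam) * (norm (w - x))\<^sup>2 + g x \<le> 1 / (2 * lam) * (norm (w - y))\<^sup>2 + g y"
  shows "D_fun lam g w = 1 / (2 * lam) * (norm w)\<^sup>2 - moreau_env lam g w"
proof -
  have dual_objective: "1 / lam * (w \<bullet> y) - 1 / (2 * lam) * (norm y)\<^sup>2 - g y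
      = 1 / (2 * lam) * (norm w)\<^sup>2 - (1 / (2 * lam) * (norm (w - y))\<^sup>2 + g y)" for y
    using assms(1) by (simp add: norm_diff_sq field_simps)
  have "D_fun lam g w = 1 / (2 * lam) * (norm w)\<^sup>2 - (1 / (2 * lam) * (norm (w - x))\<^sup>2 + g x)"
    unfolding D_fun_def dual_objective by (rule cSup_eq_maximum) (use min in \<open>fastforce intro: diff_left_mono\<close>)+
  then show ?thesis
    using moreau_env_eq_at_minimizer[OF min] by simp
qed

theorem mainTheorem1:
  fixes f g :: "'a::euclidean_space \<Rightarrow> real"
    and h :: "'a \<Rightarrow> ereal"
    and \<zeta> :: "'a \<Rightarrow> 'a"
    and L lam :: real and wk :: 'a
  assumes smooth: "L_smooth L f"
    and h_proper: "proper_fun h" and h_closed: "closed_fun h" and h_convex: "convex_fun h"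
    and lam_pos: "lam > 0"
    and attained: "\<forall>w. \<exists>x. \<forall>y. 1 / (2 * lam) * (norm (w - x))\<^sup>2 + g x
                                 \<le> 1 / (2 * lam) * (norm (w - y))\<^sup>2 + g y"
    and zeta_min: "\<forall>w y. 1 / (2 * lam) * (norm (w - \<zeta> w))\<^sup>2 + g (\<zeta> w)
                          \<le> 1 / (2 * lam) * (norm (w - y))\<^sup>2 + g y"
  defines "\<Phi> \<equiv> (\<lambda>w. ereal (f w + moreau_env lam g w) + h w)"
    and "E \<equiv> (\<lambda>w. f w + (1 / (2 * lam) * (norm w)\<^sup>2 - D_fun lam g wk
                                   - 1 / lam * (\<zeta> wk \<bullet> (w - wk))))"
  shows "(\<forall>w. ereal (E w) + h w \<ge> \<Phi> w)
       \<and> ereal (E wk) + h wk = \<Phi> wk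
       \<and> L_smooth (L + 1 / lam) E"
proof -
  define z where "z = \<zeta> wk"
  have env: "moreau_env lam g w = 1 / (2 * lam) * (norm (w - \<zeta> w))\<^sup>2 + g (\<zeta> w)" for w
    using zeta_min by (intro moreau_env_eq_at_minimizer) auto
  have D: "D_fun lam g wk = 1 / (2 * lam) * (norm wk)\<^sup>2 - moreau_env lam g wk"
    using lam_pos zeta_min by (intro D_fun_eq_at_minimizer) auto
  have E_eq: "E = (\<lambda>w. f w + (1 / (2 * lam) * (norm (w - z))\<^sup>2 + g z))"
    unfolding E_def D env z_def using lam_pos
    by (simp add: fun_eq_iff norm_diff_sq inner_diff_right inner_commute field_simps)
  have "\<Phi> w \<le> ereal (E w) + h w" for w
    unfolding \<Phi>_def E_eq by (intro add_right_mono) (use env zeta_min in auto)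
  moreover have "ereal (E wk) + h wk = \<Phi> wk"
    unfolding \<Phi>_def E_eq env z_def by simp
  moreover have "L_smooth (L + 2 * (1 / (2 * lam))) E"
    unfolding E_eq using lam_pos
    by (intro L_smooth_add smooth L_smooth_scaled_dist_sq) simp
  ultimately show ?thesis by simp
qed

end
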